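(* Let $d\ge1$ and $\Box^d\subset\mathbb R^d$ be the $d$-cube. For $1\le i\le d$ let $a_i$ be the facet $\{x\in\Box^d:x_i=1\}$ and $a_{-i}$ the facet $\{x\in\Box^d:x_i=-1\}$. Then the face monoid of $\Box^d$ has a presentation with generators $a_{\pm1},\dots,a_{\pm d}$ and relations $a_i^2=a_i$ for all $i$; $a_ia_j=a_ja_i$ for all $i,j\in\{\pm1,\dots,\pm d\}$; and $a_ia_{-i}=a_ia_{-i}a_j$ for all $i\in\{1,\dots,d\}$ and all $j\in\{\pm1,\dots,\pm d\}$.
   Context: $\Box^d$ is the convex hull of $\{\sum_i\varepsilon_iv_i:\varepsilon_i=\pm1\}$ where $v_1,\dots,v_d$ is the standard basis. The face monoid of a polytope is the set of its faces (including the polytope itself and $\varnothing$) under intersection. *)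

theory Defs
  imports "HOL-Analysis.Analysis"
begin

definition cube :: "(real ^ 'n) set" where
  "cube = convex hull {(\<Sum>i\<in>UNIV. \<epsilon> i *\<^sub>R axis i (1::real)) | \<epsilon>. \<forall>i. \<epsilon> i = 1 \<or> \<epsilon> i = -1}"

text \<open>Generators: a generator (i, True) is a_i, the generator (i, False) is a_{-i}.\<close>
type_synonym 'n gen = "'n \<times> bool"

definition facet :: "'n gen \<Rightarrow> (real ^ 'n) set" where
  "facet g = {x \<in> cube. x $ fst g = (if snd g then 1 else -1)}"

text \<open>The face monoid: all faces of the cube (including the empty set and the cube), under intersection.\<close>
definition face_monoid :: "(real ^ 'n) set set" where
  "face_monoid = {F. F face_of (cube :: (real ^ 'n) set)}"

definition eval_word :: "'n gen list \<Rightarrow> (real ^ 'n) set" where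
  "eval_word w = foldr (\<lambda>g F. facet g \<inter> F) w cube"

inductive cube_rel :: "'n gen list \<Rightarrow> 'n gen list \<Rightarrow> bool" where
  idem: "cube_rel [g, g] [g]"
| comm: "cube_rel [g, h] [h, g]"
| absorb: "cube_rel [(i, True), (i, False)] [(i, True), (i, False), j]"

inductive cong_gen :: "('a list \<Rightarrow> 'a list \<Rightarrow> bool) \<Rightarrow> 'a list \<Rightarrow> 'a list \<Rightarrow> bool"
  for R where
  base: "R u v \<Longrightarrow> cong_gen R (x @ u @ y) (x @ v @ y)"
| refl: "cong_gen R u u"
| sym: "cong_gen R u v \<Longrightarrow> cong_gen R v u"
| trans: "cong_gen R u v \<Longrightarrow> cong_gen R v w \<Longrightarrow> cong_gen R u w"

end

theory Submission
  imports Defs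
begin

text \<open>The cube is the box \<open>[-1,1]\<^sup>d\<close>, so a word evaluates to the set of points of the box whose
  \<open>i\<close>-th coordinate is prescribed to be \<open>\<plusminus>1\<close> by its letters. This set is empty exactly when the word
  contains both \<open>a\<^sub>i\<close> and \<open>a\<^sub>-\<^sub>i\<close> for some \<open>i\<close>; otherwise it determines the set of letters of the word,
  witnessed by the point with the prescribed coordinates and \<open>0\<close> elsewhere. Commutation and
  idempotence identify words with the same set of letters, and the third relation lets every
  word containing some \<open>a\<^sub>i a\<^sub>-\<^sub>i\<close> absorb every other word. Finally, every face of the cube is
  exposed, and a supporting hyperplane \<open>a \<bullet> x = \<Sum>\<^sub>i \<bar>a\<^sub>i\<bar>\<close> cuts out the word with letters
  \<open>(i, sgn a\<^sub>i)\<close> for \<open>a\<^sub>i \<noteq> 0\<close>.\<close>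

lemma mem_unit_box_cart: "x \<in> cbox (-1) (1::real^'n) \<longleftrightarrow> (\<forall>i. \<bar>x$i\<bar> \<le> 1)"
  by (auto simp: mem_box_cart abs_le_iff)

lemma sum_axis_component: "(\<Sum>i\<in>UNIV. \<epsilon> i *\<^sub>R axis i (1::real)) $ k = \<epsilon> k"
proof -
  have "(\<Sum>i\<in>UNIV. \<epsilon> i *\<^sub>R axis i (1::real)) $ k = (\<Sum>i\<in>UNIV. if i = k then \<epsilon> i else 0)"
    unfolding sum_component by (intro sum.cong) (auto simp: axis_def)
  then show ?thesis by simp
qed

lemma extreme_point_of_unit_box_cart:
  assumes "x extreme_point_of cbox (-1) (1::real^'n)"
  shows "\<bar>x$k\<bar> = 1"
proof (rule ccontr)
  assume "\<bar>x$k\<bar> \<noteq> 1"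
  have x: "\<forall>i. \<bar>x$i\<bar> \<le> 1"
    using assms by (simp add: extreme_point_of_def mem_unit_box_cart)
  define d where "d = 1 - \<bar>x$k\<bar>"
  have "d > 0"
    using x \<open>\<bar>x$k\<bar> \<noteq> 1\<close> unfolding d_def by (metis diff_gt_0_iff_gt order_le_neq_trans)
  let ?a = "x + d *\<^sub>R axis k 1" and ?b = "x - d *\<^sub>R axis k 1"
  have "\<bar>?a$i\<bar> \<le> 1 \<and> \<bar>?b$i\<bar> \<le> 1" for i
    using x[rule_format, of i] \<open>d > 0\<close> by (cases "i = k") (auto simp: axis_def d_def abs_if)
  then have "?a \<in> cbox (-1) 1" "?b \<in> cbox (-1) 1"
    by (auto simp: mem_unit_box_cart)
  moreover have "x \<in> open_segment ?a ?b"
  proof -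
    have "?a $ k \<noteq> ?b $ k"
      using \<open>d > 0\<close> by simp
    then have "?a \<noteq> ?b"
      by metis
    moreover have "midpoint ?a ?b = x"
      by (simp add: midpoint_def algebra_simps scaleR_2[symmetric])
    ultimately show ?thesis
      using midpoint_in_open_segment by metis
  qed
  ultimately show False
    using assms unfolding extreme_point_of_def by blast
qed

lemma cube_eq_unit_box: "cube = cbox (-1) (1::real^'n)"
proof
  show "cube \<subseteq> cbox (-1) (1::real^'n)"
    unfolding cube_def
  proof (rule hull_minimal, clarify)
    fix \<epsilon> :: "'n \<Rightarrow> real"
    assume "\<forall>i. \<epsilon> i = 1 \<or> \<epsilon> i = -1"
    then show "(\<Sum>i\<in>UNIV. \<epsilon> i *\<^sub>R axis i (1::real)) \<in> cbox (-1) 1"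
      unfolding mem_unit_box_cart sum_axis_component by (metis abs_1 abs_minus_cancel order_refl)
  qed (simp add: convex_box)
  have "cbox (-1) (1::real^'n) = convex hull {x. x extreme_point_of cbox (-1) (1::real^'n)}"
    by (rule Krein_Milman_Minkowski) (simp_all add: convex_box)
  also have "\<dots> \<subseteq> cube"
    unfolding cube_def
  proof (rule hull_mono, clarify)
    fix x :: "real^'n"
    assume x: "x extreme_point_of cbox (-1) 1"
    have "x = (\<Sum>i\<in>UNIV. (x$i) *\<^sub>R axis i (1::real))"
      using basis_expansion[of x] by (simp add: scalar_mult_eq_scaleR)
    moreover have "\<forall>i. x$i = 1 \<or> x$i = -1"
      using extreme_point_of_unit_box_cart[OF x] by (metis abs_1 abs_eq_iff)
    ultimately show "\<exists>\<epsilon>. x = (\<Sum>i\<in>UNIV. \<epsilon> i *\<^sub>R axis i (1::real)) \<and> (\<forall>i. \<epsilon> i = 1 \<or> \<epsilon> i = -1)"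
      by blast
  qed
  finally show "cbox (-1) (1::real^'n) \<subseteq> cube" .
qed

definition gen_sign :: "'n gen \<Rightarrow> real" where
  "gen_sign g = (if snd g then 1 else -1)"

lemma facet_eq_cube_Int: "facet g = {x \<in> cube. x $ fst g = gen_sign g}"
  by (simp add: facet_def gen_sign_def)

lemma eval_word_eq: "eval_word w = {x \<in> cube. \<forall>g\<in>set w. x $ fst g = gen_sign g}"
  by (induction w) (auto simp: eval_word_def facet_eq_cube_Int)

lemma eval_word_eq_if_set_eq: "set u = set v \<Longrightarrow> eval_word u = eval_word v"
  by (simp add: eval_word_eq)

definition contradictory :: "'n gen list \<Rightarrow> bool" where
  "contradictory w \<longleftrightarrow> (\<exists>i. (i, True) \<in> set w \<and> (i, False) \<in> set w)"

definition word_point :: "'n gen list \<Rightarrow> real^'n" where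
  "word_point w = (\<chi> i. if (i, True) \<in> set w then 1 else if (i, False) \<in> set w then -1 else 0)"

lemma word_point_in_eval_word:
  assumes "\<not> contradictory w"
  shows "word_point w \<in> eval_word w"
proof -
  have "word_point w $ i = gen_sign (i, s)" if "(i, s) \<in> set w" for i s
    using assms that by (cases s) (auto simp: contradictory_def word_point_def gen_sign_def)
  moreover have "word_point w \<in> cube"
    by (simp add: cube_eq_unit_box mem_unit_box_cart word_point_def)
  ultimately show ?thesis
    by (auto simp: eval_word_eq)
qed

lemma word_point_component_neq:
  assumes "g \<notin> set w"
  shows "word_point w $ fst g \<noteq> gen_sign g"
  using assms by (cases g; cases "snd g") (auto simp: word_point_def gen_sign_def)

lemma eval_word_eq_empty_iff: "eval_word w = {} \<longleftrightarrow> contradictory w"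
proof
  show "contradictory w" if "eval_word w = {}"
    using that word_point_in_eval_word by blast
next
  assume "contradictory w"
  then obtain i where i: "(i, True) \<in> set w" "(i, False) \<in> set w"
    unfolding contradictory_def by blast
  have "x \<notin> eval_word w" for x
  proof
    assume "x \<in> eval_word w"
    then have x: "\<forall>g\<in>set w. x $ fst g = gen_sign g"
      by (simp add: eval_word_eq)
    show False
      using bspec[OF x i(1)] bspec[OF x i(2)] by (simp add: gen_sign_def)
  qed
  then show "eval_word w = {}"
    by blast
qed

lemma set_subset_if_eval_word_subset:
  assumes "\<not> contradictory v" and "eval_word v \<subseteq> eval_word u"
  shows "set u \<subseteq> set v"
proof
  fix g
  assume "g \<in> set u"
  moreover have "word_point v \<in> eval_word u"
    using assms word_point_in_eval_word by blast
  ultimately have "word_point v $ fst g = gen_sign g"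
    by (simp add: eval_word_eq)
  then show "g \<in> set v"
    using word_point_component_neq by blast
qed

lemma facet_face_of_cube: "facet (g :: 'n::finite gen) face_of cube"
proof -
  let ?a = "gen_sign g *\<^sub>R axis (fst g) (1::real)"
  have inner_a: "?a \<bullet> x = gen_sign g * x $ fst g" for x :: "real^'n"
    by (simp add: inner_axis')
  have "facet g = cube \<inter> {x. ?a \<bullet> x = 1}"
    unfolding facet_eq_cube_Int inner_a by (auto simp: gen_sign_def)
  moreover have "(cube \<inter> {x. ?a \<bullet> x = 1}) face_of cube"
  proof (rule face_of_Int_supporting_hyperplane_le)
    show "convex (cube :: (real^'n) set)"
      by (simp add: cube_eq_unit_box)
    fix x :: "real^'n"
    assume "x \<in> cube"
    then have "\<bar>x $ fst g\<bar> \<le> 1"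
      by (simp add: cube_eq_unit_box mem_unit_box_cart)
    then show "?a \<bullet> x \<le> 1"
      unfolding inner_a by (auto simp: gen_sign_def)
  qed
  ultimately show ?thesis
    by simp
qed

lemma eval_word_face_of_cube: "eval_word w face_of cube"
proof (induction w)
  case Nil
  then show ?case
    by (simp add: eval_word_def cube_eq_unit_box face_of_refl)
next
  case (Cons g w)
  then show ?case
    using face_of_Int[OF facet_face_of_cube] by (simp add: eval_word_def)
qed

lemma mult_le_abs_if_abs_le_1:
  fixes a x :: real
  assumes "\<bar>x\<bar> \<le> 1"
  shows "a * x \<le> \<bar>a\<bar>"
proof -
  have "a * x \<le> \<bar>a\<bar> * \<bar>x\<bar>"
    by (metis abs_ge_self abs_mult)
  also have "\<dots> \<le> \<bar>a\<bar>"
    using assms by (simp add: mult_left_le)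
  finally show ?thesis .
qed

lemma mult_eq_abs_iff_if_abs_le_1:
  "\<bar>x\<bar> \<le> 1 \<Longrightarrow> a * x = \<bar>a\<bar> \<longleftrightarrow> (a \<noteq> 0 \<longrightarrow> x = sgn a)" for a x :: real
  by (cases a "0::real" rule: linorder_cases)
    (auto simp: sgn_if, metis mult_cancel_left mult_minus1_right less_irrefl)

lemma inner_le_sum_abs_if_mem_cube:
  "x \<in> cube \<Longrightarrow> a \<bullet> x \<le> (\<Sum>i\<in>UNIV. \<bar>a$i\<bar>)" for a x :: "real^'n"
  unfolding inner_vec_def inner_real_def cube_eq_unit_box mem_unit_box_cart
  by (auto intro!: sum_mono mult_le_abs_if_abs_le_1)

lemma inner_eq_sum_abs_iff_if_mem_cube:
  fixes a x :: "real^'n"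
  assumes "x \<in> cube"
  shows "a \<bullet> x = (\<Sum>i\<in>UNIV. \<bar>a$i\<bar>) \<longleftrightarrow> (\<forall>i. a$i \<noteq> 0 \<longrightarrow> x$i = sgn (a$i))"
proof -
  have x: "\<bar>x$i\<bar> \<le> 1" for i
    using assms by (simp add: cube_eq_unit_box mem_unit_box_cart)
  have "a \<bullet> x = (\<Sum>i\<in>UNIV. \<bar>a$i\<bar>) \<longleftrightarrow> (\<forall>i. a$i * x$i = \<bar>a$i\<bar>)"
    unfolding inner_vec_def inner_real_def
  proof
    show "\<forall>i. a$i * x$i = \<bar>a$i\<bar>" if "(\<Sum>i\<in>UNIV. a$i * x$i) = (\<Sum>i\<in>UNIV. \<bar>a$i\<bar>)"
      using sum_mono_inv[OF that mult_le_abs_if_abs_le_1[OF x]] by simp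
  qed simp
  also have "\<dots> \<longleftrightarrow> (\<forall>i. a$i \<noteq> 0 \<longrightarrow> x$i = sgn (a$i))"
    using mult_eq_abs_iff_if_abs_le_1[OF x] by blast
  finally show ?thesis .
qed

lemma cube_Int_hyperplane_sum_abs_obtain_word:
  fixes a :: "real^'n"
  obtains w where "eval_word w = cube \<inter> {x. a \<bullet> x = (\<Sum>i\<in>UNIV. \<bar>a$i\<bar>)}"
proof -
  have "finite {(i, 0 < a$i) | i. a$i \<noteq> 0}"
    by (rule finite_subset[of _ UNIV]) auto
  then obtain w where w: "set w = {(i, 0 < a$i) | i. a$i \<noteq> 0}"
    using finite_list by blast
  have "eval_word w = {x \<in> cube. \<forall>i. a$i \<noteq> 0 \<longrightarrow> x$i = sgn (a$i)}"
    unfolding eval_word_eq w by (auto simp: gen_sign_def sgn_if)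
  also have "\<dots> = cube \<inter> {x. a \<bullet> x = (\<Sum>i\<in>UNIV. \<bar>a$i\<bar>)}"
    using inner_eq_sum_abs_iff_if_mem_cube by blast
  finally show ?thesis
    using that by blast
qed

lemma supporting_hyperplane_of_cube_eq_sum_abs:
  fixes a :: "real^'n"
  assumes "cube \<subseteq> {x. a \<bullet> x \<le> b}" and "cube \<inter> {x. a \<bullet> x = b} \<noteq> {}"
  shows "b = (\<Sum>i\<in>UNIV. \<bar>a$i\<bar>)"
proof -
  obtain y where "y \<in> cube" "a \<bullet> y = b"
    using assms(2) by blast
  then have "b \<le> (\<Sum>i\<in>UNIV. \<bar>a$i\<bar>)"
    using inner_le_sum_abs_if_mem_cube by metis
  moreover have "(\<chi> i. sgn (a$i)) \<in> cube"
    by (simp add: cube_eq_unit_box mem_unit_box_cart sgn_if)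
  then have "(\<Sum>i\<in>UNIV. \<bar>a$i\<bar>) \<le> b"
    using assms(1) inner_eq_sum_abs_iff_if_mem_cube[of "\<chi> i. sgn (a$i)" a] by auto
  ultimately show ?thesis
    by linarith
qed

lemma face_of_cube_obtain_word:
  assumes "F face_of (cube :: (real^'n) set)"
  obtains w where "eval_word w = F"
proof (cases "F = {}")
  case True
  have "contradictory [(undefined, True), (undefined, False)]"
    by (auto simp: contradictory_def)
  then show ?thesis
    using that True eval_word_eq_empty_iff by blast
next
  case False
  have "F exposed_face_of cube"
    using assms by (metis exposed_face_of_polyhedron polyhedron_interval cube_eq_unit_box)
  then obtain a b where "cube \<subseteq> {x. a \<bullet> x \<le> b}" and F: "F = cube \<inter> {x. a \<bullet> x = b}"
    unfolding exposed_face_of_def by blast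
  with False have "b = (\<Sum>i\<in>UNIV. \<bar>a$i\<bar>)"
    using supporting_hyperplane_of_cube_eq_sum_abs by blast
  then show ?thesis
    using that F cube_Int_hyperplane_sum_abs_obtain_word by metis
qed

declare cong_gen.trans [trans]

lemma cong_gen_append_context: "cong_gen R u v \<Longrightarrow> cong_gen R (x @ u @ y) (x @ v @ y)"
proof (induction rule: cong_gen.induct)
  case (base u v x' y')
  then show ?case
    using cong_gen.base[of R u v "x @ x'" "y' @ y"] by simp
qed (auto intro: cong_gen.intros)

lemma cong_gen_Cons: "cong_gen R u v \<Longrightarrow> cong_gen R (g # u) (g # v)"
  using cong_gen_append_context[of R u v "[g]" "[]"] by simp

lemma cong_gen_prefix: "R u v \<Longrightarrow> cong_gen R (u @ y) (v @ y)"
  using cong_gen.base[of R u v "[]" y] by simp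

lemma cong_cube_rel_swap: "cong_gen cube_rel (g # h # y) (h # g # y)"
  using cong_gen_prefix[of cube_rel "[g, h]" "[h, g]" y, OF cube_rel.comm] by simp

lemma cong_cube_rel_idem: "cong_gen cube_rel (g # g # y) (g # y)"
  using cong_gen_prefix[of cube_rel "[g, g]" "[g]" y, OF cube_rel.idem] by simp

lemma cong_cube_rel_move: "cong_gen cube_rel (g # xs @ ys) (xs @ g # ys)"
proof (induction xs)
  case Nil
  then show ?case
    by (simp add: cong_gen.refl)
next
  case (Cons h xs)
  have "cong_gen cube_rel (g # h # xs @ ys) (h # g # xs @ ys)"
    by (rule cong_cube_rel_swap)
  also have "cong_gen cube_rel \<dots> (h # xs @ g # ys)"
    using Cons.IH by (rule cong_gen_Cons)
  finally show ?case
    by simp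
qed

lemma cong_cube_rel_append_commute: "cong_gen cube_rel (v @ u) (u @ v)"
proof (induction v)
  case Nil
  then show ?case
    by (simp add: cong_gen.refl)
next
  case (Cons g v)
  have "cong_gen cube_rel (g # v @ u) (g # u @ v)"
    using Cons.IH by (rule cong_gen_Cons)
  also have "cong_gen cube_rel \<dots> (u @ g # v)"
    by (rule cong_cube_rel_move)
  finally show ?case
    by simp
qed

lemma cong_cube_rel_Cons_absorb: "g \<in> set w \<Longrightarrow> cong_gen cube_rel (g # w) w"
proof (induction w)
  case (Cons h w)
  show ?case
  proof (cases "g = h")
    case True
    then show ?thesis
      by (simp add: cong_cube_rel_idem)
  next
    case False
    then have "cong_gen cube_rel (h # g # w) (h # w)"
      using Cons by (intro cong_gen_Cons) simp
    then show ?thesis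
      using cong_cube_rel_swap cong_gen.trans by blast
  qed
qed simp

lemma cong_cube_rel_append_absorb: "set v \<subseteq> set w \<Longrightarrow> cong_gen cube_rel (v @ w) w"
proof (induction v)
  case Nil
  then show ?case
    by (simp add: cong_gen.refl)
next
  case (Cons g v)
  then have "cong_gen cube_rel (g # v @ w) (g # w)"
    by (intro cong_gen_Cons) simp
  also have "cong_gen cube_rel \<dots> w"
    using Cons.prems by (intro cong_cube_rel_Cons_absorb) simp
  finally show ?case
    by simp
qed

lemma cong_cube_rel_if_set_eq:
  assumes "set u = set v"
  shows "cong_gen cube_rel u v"
proof -
  have "cong_gen cube_rel u (v @ u)"
    using assms cong_cube_rel_append_absorb[of v u] by (simp add: cong_gen.sym)
  also have "cong_gen cube_rel \<dots> (u @ v)"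
    by (rule cong_cube_rel_append_commute)
  also have "cong_gen cube_rel \<dots> v"
    using assms by (simp add: cong_cube_rel_append_absorb)
  finally show ?thesis .
qed

lemma cong_cube_rel_contradiction_absorb:
  "cong_gen cube_rel ([(i, True), (i, False)] @ xs) [(i, True), (i, False)]"
proof (induction xs)
  case Nil
  then show ?case
    by (simp add: cong_gen.refl)
next
  case (Cons j xs)
  have "cong_gen cube_rel ([(i, True), (i, False)] @ j # xs) ([(i, True), (i, False)] @ xs)"
    using cong_gen_prefix[of cube_rel _ "[(i, True), (i, False), j]" xs, OF cube_rel.absorb]
    by (simp add: cong_gen.sym)
  then show ?case
    using Cons.IH by (rule cong_gen.trans)
qed

lemma cong_cube_rel_append_absorb_if_contradictory:
  assumes "contradictory u"
  shows "cong_gen cube_rel (u @ v) u"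
proof -
  obtain i where i: "(i, True) \<in> set u" "(i, False) \<in> set u"
    using assms unfolding contradictory_def by blast
  let ?c = "[(i, True), (i, False)]"
  have "cong_gen cube_rel (u @ v) (?c @ u @ v)"
    using i cong_cube_rel_append_absorb[of ?c "u @ v"] by (simp add: cong_gen.sym)
  also have "cong_gen cube_rel \<dots> ?c"
    by (rule cong_cube_rel_contradiction_absorb)
  also have "cong_gen cube_rel \<dots> (?c @ u)"
    using cong_cube_rel_contradiction_absorb by (rule cong_gen.sym)
  also have "cong_gen cube_rel \<dots> u"
    using i cong_cube_rel_append_absorb[of ?c u] by simp
  finally show ?thesis .
qed

lemma cong_cube_rel_if_contradictory:
  assumes "contradictory u" and "contradictory v"
  shows "cong_gen cube_rel u v"
proof -
  have "cong_gen cube_rel u (u @ v)"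
    using assms(1) by (rule cong_gen.sym[OF cong_cube_rel_append_absorb_if_contradictory])
  also have "cong_gen cube_rel \<dots> (v @ u)"
    by (rule cong_cube_rel_append_commute)
  also have "cong_gen cube_rel \<dots> v"
    using assms(2) by (rule cong_cube_rel_append_absorb_if_contradictory)
  finally show ?thesis .
qed

lemma eval_word_eq_if_cong_cube_rel: "cong_gen cube_rel u v \<Longrightarrow> eval_word u = eval_word v"
proof (induction rule: cong_gen.induct)
  case (base u v x y)
  then show ?case
  proof cases
    case (absorb i j)
    then have "contradictory (x @ u @ y)" "contradictory (x @ v @ y)"
      by (auto simp: contradictory_def)
    then show ?thesis
      by (metis eval_word_eq_empty_iff)
  qed (simp_all add: eval_word_eq_if_set_eq insert_commute)
qed simp_all

lemma cong_cube_rel_if_eval_word_eq: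
  assumes "eval_word u = eval_word v"
  shows "cong_gen cube_rel u v"
proof (cases "contradictory u")
  case True
  then show ?thesis
    using assms cong_cube_rel_if_contradictory eval_word_eq_empty_iff by metis
next
  case False
  then have "\<not> contradictory v"
    using assms eval_word_eq_empty_iff by metis
  with False have "set u = set v"
    using assms set_subset_if_eval_word_subset by (metis equalityI order_refl)
  then show ?thesis
    by (rule cong_cube_rel_if_set_eq)
qed

theorem mainTheorem8:
  shows "(\<forall>w :: 'n gen list. eval_word w \<in> face_monoid)
       \<and> (\<forall>F \<in> (face_monoid :: (real ^ 'n) set set). \<exists>w. eval_word w = F)
       \<and> (\<forall>u v :: 'n gen list. eval_word u = eval_word v \<longleftrightarrow> cong_gen cube_rel u v)"
proof (intro conjI allI ballI)
  show "eval_word w \<in> face_monoid" for w :: "'n gen list"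
    by (simp add: face_monoid_def eval_word_face_of_cube)
  show "\<exists>w. eval_word w = F" if "F \<in> (face_monoid :: (real ^ 'n) set set)" for F
    using that face_of_cube_obtain_word unfolding face_monoid_def by blast
  show "eval_word u = eval_word v \<longleftrightarrow> cong_gen cube_rel u v" for u v :: "'n gen list"
    using cong_cube_rel_if_eval_word_eq eval_word_eq_if_cong_cube_rel by blast
qed

end
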